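(* Let $X=\{1,\ldots,K\}$. The family $f_n:X^n\to\mathbb{Q}^K$, $f_n(x)=(p_1(x),\ldots,p_K(x))$, is computable with infinite memory (with output set $Y=\mathbb{Q}^K$, or its subset $(\mathbb{Q}\cap[0,1])^K$, together with a default element).
   Context: Model of computation. Let $X$ (initial values), $Y$ (outputs), $M$ (messages) be sets and, for each integer $d\ge 0$, let $Z_d$ be a set (memory states); each of $Y$, $M$, $Z_d$ contains a distinguished element $\emptyset$. An automaton family is a sequence of maps $(A_d)_{d\ge0}$, $A_d: X\times Z_d\times Y\times M^d\to X\times Z_d\times Y\times M^d$, which leave the first coordinate unchanged. A network is a finite connected simple undirected graph $G=(V,E)$ with $V=\{1,\ldots,n\}$, together with a port labeling: for each node $i$ of degree $d(i)$, a bijection $\ell_i$ from the set of neighbors of $i$ to $\{1,\ldots,d(i)\}$. Given initial values $x_1,\ldots,x_n\in X$, the execution is: node $i$ has state $S_i(t)=(x_i,z_i(t),y_i(t),m_{i,1}(t),\ldots,m_{i,d(i)}(t))$ with $z_i(0)=y_i(0)=m_{i,k}(0)=\emptyset$ ($m_{i,p}(t)$ is the message $i$ sends through its port $p$), and $S_i(t+1)=A_{d(i)}(x_i,z_i(t),y_i(t),\mu_{i,1}(t),\ldots,\mu_{i,d(i)}(t))$, where if $j$ is the neighbor of $i$ with $\ell_i(j)=k$ then $\mu_{i,k}(t)=m_{j,\ell_j(i)}(t)$. An element $y^*\in Y$ is the final output of the execution if there is $t'$ with $y_i(t)=y^*$ for all nodes $i$ and all $t\ge t'$. Infinite memory: $X$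 and $M$ are finite, while the sets $Z_d$ and $Y$ may be countable. A family of functions $(f_n:X^n\to Y)_{n\ge1}$ is computable with infinite memory if there exists an automaton family with infinite memory such that for every $n$, every network with $n$ nodes (every connected graph and every port labeling), and every $x\in X^n$, the execution has a final output equal to $f_n(x_1,\ldots,x_n)$. Proportions. For $X=\{1,\ldots,K\}$ and $x\in X^n$, $p_k(x)=|\{i: x_i=k\}|/n$. *)

theory Defs
  imports Main "HOL-Library.Countable_Set"
begin

definition nbrs :: "(nat \<Rightarrow> nat \<Rightarrow> bool) \<Rightarrow> nat \<Rightarrow> nat set" where
  "nbrs E i = {j. E i j}"

definition deg :: "(nat \<Rightarrow> nat \<Rightarrow> bool) \<Rightarrow> nat \<Rightarrow> nat" where
  "deg E i = card (nbrs E i)"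

definition network :: "nat \<Rightarrow> (nat \<Rightarrow> nat \<Rightarrow> bool) \<Rightarrow> (nat \<Rightarrow> nat \<Rightarrow> nat) \<Rightarrow> bool" where
  "network n E l \<longleftrightarrow> n \<ge> 1
     \<and> (\<forall>a b. E a b \<longrightarrow> a \<in> {1..n} \<and> b \<in> {1..n})
     \<and> (\<forall>a b. E a b \<longrightarrow> E b a)
     \<and> (\<forall>a. \<not> E a a)
     \<and> (\<forall>a\<in>{1..n}. \<forall>b\<in>{1..n}. E\<^sup>*\<^sup>* a b)
     \<and> (\<forall>i\<in>{1..n}. bij_betw (l i) (nbrs E i) {1..deg E i})"

definition port_nbr :: "(nat \<Rightarrow> nat \<Rightarrow> bool) \<Rightarrow> (nat \<Rightarrow> nat \<Rightarrow> nat) \<Rightarrow> nat \<Rightarrow> nat \<Rightarrow> nat" where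
  "port_nbr E l i k = (THE j. E i j \<and> l i j = k)"

text \<open>An automaton family A d: given degree d, it maps (x, z, y, incoming messages (list of
  length d)) to the new (z, y, outgoing messages); the initial value x is left unchanged,
  so it is not part of the result. The state of node i at time t is (z, y, messages),
  where the p-th message (index p-1) is the one sent through port p.\<close>

primrec exec :: "(nat \<Rightarrow> 'x \<Rightarrow> 'z \<Rightarrow> 'y \<Rightarrow> 'm list \<Rightarrow> 'z \<times> 'y \<times> 'm list)
    \<Rightarrow> (nat \<Rightarrow> 'z) \<Rightarrow> 'y \<Rightarrow> 'm
    \<Rightarrow> (nat \<Rightarrow> nat \<Rightarrow> bool) \<Rightarrow> (nat \<Rightarrow> nat \<Rightarrow> nat) \<Rightarrow> (nat \<Rightarrow> 'x)
    \<Rightarrow> nat \<Rightarrow> nat \<Rightarrow> 'z \<times> 'y \<times> 'm list" where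
  "exec A z0 y0 m0 E l x 0 = (\<lambda>i. (z0 (deg E i), y0, replicate (deg E i) m0))"
| "exec A z0 y0 m0 E l x (Suc t) = (\<lambda>i.
     let S = exec A z0 y0 m0 E l x t in
     A (deg E i) (x i) (fst (S i)) (fst (snd (S i)))
       (map (\<lambda>k. let j = port_nbr E l i k in snd (snd (S j)) ! (l j i - 1)) [1..<deg E i + 1]))"

definition has_final_output where
  "has_final_output A z0 y0 m0 E l x n ystar \<longleftrightarrow>
     (\<exists>t'. \<forall>t\<ge>t'. \<forall>i\<in>{1..n}. fst (snd (exec A z0 y0 m0 E l x t i)) = ystar)"

text \<open>Initial values are naturals ranging over the
  finite set X; messages range over a finite set M of naturals with distinguished element m0;
  memory states are natural numbers (a countable set) with distinguished element z0 d for
  degree d; outputs range over the countable set Y with distinguished element y0.\<close>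

definition computable_inf_mem ::
  "nat set \<Rightarrow> 'y set \<Rightarrow> 'y \<Rightarrow> (nat \<Rightarrow> (nat \<Rightarrow> nat) \<Rightarrow> 'y) \<Rightarrow> bool" where
  "computable_inf_mem X Y y0 f \<longleftrightarrow> finite X \<and> countable Y \<and> y0 \<in> Y \<and>
    (\<exists>(A :: nat \<Rightarrow> nat \<Rightarrow> nat \<Rightarrow> 'y \<Rightarrow> nat list \<Rightarrow> nat \<times> 'y \<times> nat list)
       (z0 :: nat \<Rightarrow> nat) (M :: nat set) (m0 :: nat).
      finite M \<and> m0 \<in> M \<and>
      (\<forall>d x z y ms. fst (snd (A d x z y ms)) \<in> Y
                    \<and> length (snd (snd (A d x z y ms))) = d
                    \<and> set (snd (snd (A d x z y ms))) \<subseteq> M) \<and>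
      (\<forall>n E l x. network n E l \<and> (\<forall>i\<in>{1..n}. x i \<in> X) \<longrightarrow>
          has_final_output A z0 y0 m0 E l x n (f n x)))"

definition prop_k :: "nat \<Rightarrow> (nat \<Rightarrow> nat) \<Rightarrow> nat \<Rightarrow> rat" where
  "prop_k n x k = of_nat (card {i\<in>{1..n}. x i = k}) / of_nat n"

text \<open>Output set Q^K (vectors as lists of length K), with default element None.\<close>
definition Yset :: "nat \<Rightarrow> rat list option set" where
  "Yset K = insert None (Some ` {v. length v = K})"

definition proportions :: "nat \<Rightarrow> nat \<Rightarrow> (nat \<Rightarrow> nat) \<Rightarrow> rat list option" where
  "proportions K n x = Some (map (prop_k n x) [1..<K+1])"

end

theory Submission
  imports Defs Complex_Main
begin

(* The automaton works in phases q = 0, 1, 2, ...  Phase q guesses the network size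
   N = q div K + 1 and tracks the value k = q mod K + 1.  Every node starts with the
   indicator a_i = [x_i = k] and performs R = rounds N rounds of the integer iteration
     a_i' = (N + 1 - d_i) a_i + (sum over neighbours j of a_j),
   which is the averaging iteration v' = ((N + 1 - d_i) v_i + sum_j v_j) / (N + 1)
   scaled by (N + 1)^r.  The integers are transmitted in unary with one-bit messages,
   so one round takes (N + 1)^R clock ticks.  At the end of the phase the node rounds
   a_i / (N + 1)^R to the nearest fraction with denominator at most N and stores it as
   its estimate of p_k; the output is the vector of current estimates. *)


lemma port_nbr_props:
  assumes net: "network n E l" and i: "i \<in> {1..n}" and k: "k \<in> {1..deg E i}"
  shows "E i (port_nbr E l i k) \<and> l i (port_nbr E l i k) = k"
proof -
  have b: "bij_betw (l i) (nbrs E i) {1..deg E i}" using net i by (simp add: network_def)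
  then obtain j where j: "j \<in> nbrs E i" "l i j = k" using k by (metis bij_betw_iff_bijections)
  have "port_nbr E l i k = j" unfolding port_nbr_def
  proof (rule the_equality)
    show "E i j \<and> l i j = k" using j by (simp add: nbrs_def)
    fix j' assume "E i j' \<and> l i j' = k"
    then show "j' = j" using b j unfolding bij_betw_def inj_on_def nbrs_def by auto
  qed
  then show ?thesis using j by (simp add: nbrs_def)
qed

lemma bij_port_nbr:
  assumes net: "network n E l" and i: "i \<in> {1..n}"
  shows "bij_betw (port_nbr E l i) {1..deg E i} (nbrs E i)"
proof -
  have b: "bij_betw (l i) (nbrs E i) {1..deg E i}" using net i by (simp add: network_def)
  have "inv_into (nbrs E i) (l i) k = port_nbr E l i k" if k: "k \<in> {1..deg E i}" for k
  proof -
    have "port_nbr E l i k \<in> nbrs E i" "l i (port_nbr E l i k) = k"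
      using port_nbr_props[OF net i k] by (simp_all add: nbrs_def)
    then show ?thesis using b by (metis bij_betw_def inv_into_f_f)
  qed
  then show ?thesis using bij_betw_inv_into[OF b] by (metis bij_betw_cong)
qed

lemma nbrs_subset: "network n E l \<Longrightarrow> nbrs E i \<subseteq> {1..n}"
  by (auto simp: network_def nbrs_def)

lemma finite_nbrs: "network n E l \<Longrightarrow> finite (nbrs E i)"
  by (meson finite_atLeastAtMost finite_subset nbrs_subset)

text \<open>A node is not its own neighbour, so its degree is less than the size of the network.\<close>

lemma deg_le:
  assumes net: "network n E l" and i: "i \<in> {1..n}"
  shows "deg E i \<le> n - 1"
proof -
  have "nbrs E i \<subseteq> {1..n} - {i}" using net by (auto simp: network_def nbrs_def)
  then have "card (nbrs E i) \<le> card ({1..n} - {i})" by (simp add: card_mono)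
  then show ?thesis using i by (simp add: deg_def)
qed

text \<open>Counting over edges from both ends: every node j is counted once per neighbour.\<close>

lemma sum_over_edges:
  assumes net: "network n E l"
  shows "(\<Sum>i\<in>{1..n}. \<Sum>j\<in>nbrs E i. f j)
       = (\<Sum>j\<in>{1..n}. of_nat (deg E j) * (f j :: 'a :: comm_semiring_1))"
proof -
  have nb: "\<And>i. nbrs E i = {j\<in>{1..n}. E i j}" using net by (auto simp: network_def nbrs_def)
  have nb': "\<And>j. nbrs E j = {i\<in>{1..n}. E i j}" using net by (auto simp: network_def nbrs_def)
  have "(\<Sum>i\<in>{1..n}. \<Sum>j\<in>nbrs E i. f j) = (\<Sum>i\<in>{1..n}. \<Sum>j\<in>{1..n}. if E i j then f j else 0)"
    unfolding nb by (rule sum.cong[OF refl], rule sum.inter_filter) simp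
  also have "\<dots> = (\<Sum>j\<in>{1..n}. \<Sum>i\<in>{1..n}. if E i j then f j else 0)" by (rule sum.swap)
  also have "\<dots> = (\<Sum>j\<in>{1..n}. \<Sum>i\<in>nbrs E j. f j)"
    unfolding nb' by (rule sum.cong[OF refl], rule sum.inter_filter[symmetric]) simp
  also have "\<dots> = (\<Sum>j\<in>{1..n}. of_nat (deg E j) * f j)" by (simp add: deg_def)
  finally show ?thesis .
qed

lemma sum_received:
  assumes net: "network n E l" and i: "i \<in> {1..n}"
    and S: "\<And>j. j \<in> nbrs E i \<Longrightarrow> snd (snd (S j)) = replicate (deg E j) (g j)"
  shows "sum_list (map (\<lambda>k. let j = port_nbr E l i k in snd (snd (S j)) ! (l j i - 1))
                      [1..<deg E i + 1])
         = (\<Sum>j\<in>nbrs E i. g j)"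
proof -
  have "map (\<lambda>k. let j = port_nbr E l i k in snd (snd (S j)) ! (l j i - 1)) [1..<deg E i + 1]
      = map (\<lambda>k. g (port_nbr E l i k)) [1..<deg E i + 1]"
  proof (rule map_cong[OF refl])
    fix k assume "k \<in> set [1..<deg E i + 1]"
    then have k: "k \<in> {1..deg E i}" by auto
    define j where "j = port_nbr E l i k"
    have Eij: "E i j" using port_nbr_props[OF net i k] j_def by simp
    then have "j \<in> nbrs E i" "j \<in> {1..n}" "i \<in> nbrs E j"
      using net by (auto simp: network_def nbrs_def)
    then have "l j i \<in> {1..deg E j}" using net unfolding network_def bij_betw_def by blast
    then show "(let j = port_nbr E l i k in snd (snd (S j)) ! (l j i - 1)) = g (port_nbr E l i k)"
      using S \<open>j \<in> nbrs E i\<close> j_def by auto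
  qed
  also have "sum_list \<dots> = (\<Sum>k\<in>{1..deg E i}. g (port_nbr E l i k))"
    by (metis Suc_eq_plus1 atLeastLessThanSuc_atLeastAtMost set_upt sum_set_upt_conv_sum_list_nat)
  also have "\<dots> = (\<Sum>j\<in>nbrs E i. g j)"
    using sum.reindex_bij_betw[OF bij_port_nbr[OF net i]] by simp
  finally show ?thesis .
qed


section \<open>The averaging iteration\<close>

text \<open>v r i is the value of node i after r rounds of the averaging iteration with
  parameter N: each node keeps weight (N + 1 - d_i) / (N + 1) on its own value and
  gives weight 1 / (N + 1) to each neighbour.\<close>

definition averaging ::
    "nat \<Rightarrow> (nat \<Rightarrow> nat \<Rightarrow> bool) \<Rightarrow> nat \<Rightarrow> (nat \<Rightarrow> nat \<Rightarrow> 'a :: linordered_field) \<Rightarrow> bool"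
  where "averaging n E N v \<longleftrightarrow> (\<forall>r. \<forall>i\<in>{1..n}. of_nat (N+1) * v (Suc r) i
      = (of_nat (N+1) - of_nat (deg E i)) * v r i + (\<Sum>j\<in>nbrs E i. v r j))"

lemma averaging_shift:
  assumes avg: "averaging n E N v" and i: "i \<in> {1..n}"
  shows "of_nat (N+1) * (v (Suc r) i - m)
      = (of_nat (N+1) - of_nat (deg E i)) * (v r i - m) + (\<Sum>j\<in>nbrs E i. v r j - m)"
proof -
  have "(\<Sum>j\<in>nbrs E i. v r j - m) = (\<Sum>j\<in>nbrs E i. v r j) - of_nat (deg E i) * m"
    by (simp add: sum_subtractf deg_def)
  then show ?thesis using avg i unfolding averaging_def by (simp add: algebra_simps)
qed

lemma averaging_uminus: "averaging n E N v \<Longrightarrow> averaging n E N (\<lambda>r i. - v r i)"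
  unfolding averaging_def by (simp add: sum_negf algebra_simps)

text \<open>For N \<ge> n all weights are nonnegative, so a common lower bound persists.\<close>

lemma averaging_lower_step:
  assumes net: "network n E l" and N: "N \<ge> n" and avg: "averaging n E N v"
    and lo: "\<forall>i\<in>{1..n}. m \<le> v r i"
  shows "\<forall>i\<in>{1..n}. m \<le> v (Suc r) i"
proof
  fix i assume i: "i \<in> {1..n}"
  have "deg E i \<le> N + 1" using deg_le[OF net i] N by simp
  then have "0 \<le> (of_nat (N+1) - of_nat (deg E i) :: 'a)" by (metis of_nat_0_le_iff of_nat_diff)
  then have "0 \<le> (of_nat (N+1) - of_nat (deg E i)) * (v r i - m)"
    using lo i by simp
  moreover have "0 \<le> (\<Sum>j\<in>nbrs E i. v r j - m)"
    using lo nbrs_subset[OF net] by (intro sum_nonneg) auto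
  ultimately have "0 \<le> of_nat (N+1) * (v (Suc r) i - m)"
    using averaging_shift[OF avg i, of r m] by simp
  then show "m \<le> v (Suc r) i"
    using of_nat_0_le_iff[of N, where 'a='a] by (auto simp: zero_le_mult_iff)
qed

lemma averaging_lower_persists:
  assumes net: "network n E l" and N: "N \<ge> n" and avg: "averaging n E N v"
    and lo: "\<forall>i\<in>{1..n}. m \<le> v r i"
  shows "\<forall>i\<in>{1..n}. m \<le> v (r + s) i"
  by (induction s) (use lo averaging_lower_step[OF net N avg] in auto)

lemma averaging_spread_step:
  assumes net: "network n E l" and N: "N \<ge> n" and avg: "averaging n E N v"
    and lo: "\<forall>i\<in>{1..n}. m \<le> v r i" and b: "b \<in> {1..n}" and w: "0 \<le> w"
    and near: "m + w \<le> v r b \<or> (\<exists>c. E c b \<and> m + w \<le> v r c)"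
  shows "m + w / of_nat (N+1) \<le> v (Suc r) b"
proof -
  define own where "own = (of_nat (N+1) - of_nat (deg E b)) * (v r b - m)"
  define others where "others = (\<Sum>j\<in>nbrs E b. v r j - m)"
  have dN: "of_nat (deg E b) \<le> (of_nat N :: 'a)" using deg_le[OF net b] N by simp
  have others0: "0 \<le> others"
    unfolding others_def using lo nbrs_subset[OF net] by (intro sum_nonneg) auto
  have own_ge: "v r b - m \<le> own"
  proof -
    have "0 \<le> (of_nat N - of_nat (deg E b)) * (v r b - m)"
      using dN lo b by (intro mult_nonneg_nonneg) auto
    then show ?thesis unfolding own_def by (simp add: algebra_simps)
  qed
  have "w \<le> own + others"
    using near
  proof
    assume "m + w \<le> v r b"
    then show ?thesis using own_ge others0 by linarith
  next
    assume "\<exists>c. E c b \<and> m + w \<le> v r c"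
    then obtain c where c: "E c b" "m + w \<le> v r c" by blast
    then have "c \<in> nbrs E b" using net by (simp add: network_def nbrs_def)
    then have "v r c - m \<le> others"
      unfolding others_def using lo nbrs_subset[OF net] finite_nbrs[OF net]
      by (intro member_le_sum) auto
    moreover have "0 \<le> own" using own_ge lo b by force
    ultimately show ?thesis using c by linarith
  qed
  then have "w \<le> of_nat (N+1) * (v (Suc r) b - m)"
    using averaging_shift[OF avg b, of r m] by (simp add: own_def others_def)
  moreover have pos: "0 < (of_nat (N+1) :: 'a)" by (rule of_nat_0_less_iff[THEN iffD2]) simp
  ultimately have "w / of_nat (N+1) \<le> v (Suc r) b - m"
    by (subst pos_divide_le_eq[OF pos]) (simp add: mult.commute)
  then show ?thesis by simp
qed

primrec reach_within :: "(nat \<Rightarrow> nat \<Rightarrow> bool) \<Rightarrow> nat \<Rightarrow> nat \<Rightarrow> nat \<Rightarrow> bool" where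
  "reach_within E 0 a b = (a = b)"
| "reach_within E (Suc s) a b = (reach_within E s a b \<or> (\<exists>c. reach_within E s a c \<and> E c b))"

lemma averaging_propagate:
  assumes net: "network n E l" and N: "N \<ge> n" and avg: "averaging n E N v"
    and lo: "\<forall>i\<in>{1..n}. m \<le> v r i" and a: "a \<in> {1..n}" and va: "m + \<delta> \<le> v r a"
    and \<delta>: "0 \<le> \<delta>"
  shows "\<forall>b\<in>{1..n}. reach_within E s a b \<longrightarrow> m + (1 / of_nat (N+1)) ^ s * \<delta> \<le> v (r + s) b"
proof (induction s)
  case 0
  then show ?case using va by simp
next
  case (Suc s)
  have lo': "\<forall>i\<in>{1..n}. m \<le> v (r + s) i" using averaging_lower_persists[OF net N avg lo] .
  show ?case
  proof (intro ballI impI)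
    fix b assume b: "b \<in> {1..n}" and reach: "reach_within E (Suc s) a b"
    define w where "w = (1 / of_nat (N+1) :: 'a) ^ s * \<delta>"
    have "m + w \<le> v (r + s) b \<or> (\<exists>c. E c b \<and> m + w \<le> v (r + s) c)"
      using reach Suc.IH b net unfolding w_def by (auto simp: network_def)
    from averaging_spread_step[OF net N avg lo' b _ this] \<delta>
    show "m + (1 / of_nat (N+1)) ^ Suc s * \<delta> \<le> v (r + Suc s) b"
      unfolding w_def by (simp add: field_simps)
  qed
qed

lemma reach_within_mono: "reach_within E s a b \<Longrightarrow> reach_within E (s + t) a b"
  by (induction t) auto

lemma reach_within_nodes:
  assumes net: "network n E l" and a: "a \<in> {1..n}"
  shows "reach_within E s a b \<Longrightarrow> b \<in> {1..n}"
  by (induction s arbitrary: b) (use a net in \<open>auto simp: network_def\<close>)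

lemma rtranclp_reach_within: "E\<^sup>*\<^sup>* a b \<Longrightarrow> \<exists>s. reach_within E s a b"
proof (induction rule: rtranclp_induct)
  case base
  then show ?case by (metis reach_within.simps(1))
next
  case (step y z)
  then show ?case by (metis reach_within.simps(2))
qed

lemma reach_within_stable:
  assumes "{b. reach_within E (Suc s) a b} = {b. reach_within E s a b}"
  shows "{b. reach_within E (s + t) a b} = {b. reach_within E s a b}"
proof (induction t)
  case 0
  then show ?case by simp
next
  case (Suc t)
  have "{b. reach_within E (Suc (s + t)) a b}
      = {b. reach_within E (s + t) a b} \<union> {b. \<exists>c. reach_within E (s + t) a c \<and> E c b}"
    by auto
  also have "\<dots> = {b. reach_within E (Suc s) a b}" using Suc by auto
  finally show ?case using assms by simp
qed

lemma reach_within_grows: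
  assumes net: "network n E l" and a: "a \<in> {1..n}"
  shows "{b. reach_within E s a b} = {1..n} \<or> Suc s \<le> card {b. reach_within E s a b}"
proof (induction s)
  case 0
  have "{b. reach_within E 0 a b} = {a}" by auto
  then show ?case by simp
next
  case (Suc s)
  let ?W = "\<lambda>s. {b. reach_within E s a b}"
  have sub: "\<And>s. ?W s \<subseteq> {1..n}" using reach_within_nodes[OF net a] by blast
  have mono: "?W s \<subseteq> ?W (Suc s)" by auto
  show ?case
  proof (cases "?W s = {1..n}")
    case True
    then show ?thesis using sub[of "Suc s"] mono by blast
  next
    case False
    have "?W (Suc s) \<noteq> ?W s"
    proof
      assume stable: "?W (Suc s) = ?W s"
      have "{1..n} \<subseteq> ?W s"
      proof
        fix b assume "b \<in> {1..n}"
        then have "E\<^sup>*\<^sup>* a b" using net a by (simp add: network_def)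
        then obtain t where "reach_within E t a b" using rtranclp_reach_within by blast
        then have "reach_within E (s + t) a b" by (metis add.commute reach_within_mono)
        then show "b \<in> ?W s" using reach_within_stable[OF stable, of t] by blast
      qed
      then show False using False sub by blast
    qed
    then have "?W s \<subset> ?W (Suc s)" using mono by blast
    then have "card (?W s) < card (?W (Suc s))"
      by (meson finite_atLeastAtMost finite_subset psubset_card_mono sub)
    then show ?thesis using Suc False by simp
  qed
qed

lemma reach_within_all:
  assumes net: "network n E l" and a: "a \<in> {1..n}" and N: "N \<ge> n" and b: "b \<in> {1..n}"
  shows "reach_within E N a b"
proof -
  have "{b. reach_within E n a b} \<subseteq> {1..n}" using reach_within_nodes[OF net a] by blast
  then have "card {b. reach_within E n a b} \<le> n" using card_mono[of "{1..n}"] by fastforce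
  then have "{b. reach_within E n a b} = {1..n}" using reach_within_grows[OF net a, of n] by linarith
  then have "reach_within E n a b" using b by blast
  then show ?thesis using reach_within_mono[of E n a b "N - n"] N by simp
qed

text \<open>The factor by which the spread of the values shrinks in N rounds.\<close>

definition contraction :: "nat \<Rightarrow> 'a :: linordered_field" where
  "contraction N = 1 - (1 / of_nat (N+1)) ^ N"

lemma contraction_bounds: "0 \<le> (contraction N :: 'a :: linordered_field)" "contraction N < (1 :: 'a)"
proof -
  have pos: "(0::'a) < of_nat (N+1)" by (rule of_nat_0_less_iff[THEN iffD2]) simp
  then have w: "0 < (1 / of_nat (N+1) :: 'a)" "1 / of_nat (N+1) \<le> (1 :: 'a)"
    by (simp_all add: divide_le_eq_1)
  have "(1 / of_nat (N+1)) ^ N \<le> (1 :: 'a)" "0 < (1 / of_nat (N+1) :: 'a) ^ N"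
    using power_le_one[OF less_imp_le[OF w(1)] w(2)] zero_less_power[OF w(1)] .
  then show "0 \<le> (contraction N :: 'a)" "contraction N < (1 :: 'a)"
    unfolding contraction_def by linarith+
qed

text \<open>If all values lie in [lo, hi], then N \<ge> n rounds later they lie in an interval of
  length at most contraction N * (hi - lo): the maximum spreads a lower bound to
  every node, and symmetrically the minimum spreads an upper bound.\<close>

lemma averaging_contract:
  assumes net: "network n E l" and N: "N \<ge> n" and avg: "averaging n E N v"
    and bounds: "\<forall>i\<in>{1..n}. lo \<le> v r i \<and> v r i \<le> hi"
  shows "\<exists>lo' hi'. (\<forall>i\<in>{1..n}. lo' \<le> v (r + N) i \<and> v (r + N) i \<le> hi')
           \<and> hi' - lo' \<le> contraction N * (hi - lo)"
proof -
  define V where "V = v r ` {1..n}"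
  have "n \<ge> 1" using net by (simp add: network_def)
  then have fin: "finite V" and ne: "V \<noteq> {}" by (auto simp: V_def)
  obtain a where a: "a \<in> {1..n}" "v r a = Max V" using Max_in[OF fin ne] by (auto simp: V_def)
  obtain c where c: "c \<in> {1..n}" "v r c = Min V" using Min_in[OF fin ne] by (auto simp: V_def)
  define w :: 'a where "w = (1 / of_nat (N+1)) ^ N"
  define \<delta> where "\<delta> = Max V - Min V"
  have above_min: "\<forall>i\<in>{1..n}. Min V \<le> v r i" and below_max: "\<forall>i\<in>{1..n}. - Max V \<le> - v r i"
    using fin by (auto simp: V_def)
  have \<delta>: "0 \<le> \<delta>" using above_min a unfolding \<delta>_def by force
  have L: "Min V + w * \<delta> \<le> v (r + N) i" if i: "i \<in> {1..n}" for i
  proof -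
    have "Min V + \<delta> \<le> v r a" using a by (simp add: \<delta>_def)
    from averaging_propagate[OF net N avg above_min a(1) this \<delta>, of N] i
    show ?thesis using reach_within_all[OF net a(1) N i] by (simp add: w_def)
  qed
  have U: "v (r + N) i \<le> Max V - w * \<delta>" if i: "i \<in> {1..n}" for i
  proof -
    have "- Max V + \<delta> \<le> - v r c" using c by (simp add: \<delta>_def)
    from averaging_propagate[OF net N averaging_uminus[OF avg] below_max c(1) this \<delta>, of N] i
    have "- Max V + w * \<delta> \<le> - v (r + N) i"
      using reach_within_all[OF net c(1) N i] by (simp add: w_def)
    then show ?thesis by simp
  qed
  have "contraction N = 1 - w" by (simp add: contraction_def w_def)
  then have w: "0 \<le> w" "w \<le> 1" using contraction_bounds[where 'a='a, of N] by linarith+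
  have "lo \<le> Min V" "Max V \<le> hi"
    using bounds[rule_format, OF c(1)] bounds[rule_format, OF a(1)] a(2) c(2) by auto
  then have "(1 - w) * \<delta> \<le> (1 - w) * (hi - lo)"
    using w unfolding \<delta>_def by (intro mult_left_mono) auto
  moreover have "(Max V - w * \<delta>) - (Min V + w * \<delta>) \<le> (1 - w) * \<delta>"
    using mult_nonneg_nonneg[OF w(1) \<delta>] by (simp add: algebra_simps \<delta>_def)
  ultimately have "(Max V - w * \<delta>) - (Min V + w * \<delta>) \<le> contraction N * (hi - lo)"
    unfolding \<open>contraction N = 1 - w\<close> by linarith
  then show ?thesis using L U by blast
qed

lemma averaging_iterate:
  assumes net: "network n E l" and N: "N \<ge> n" and avg: "averaging n E N v"
    and bounds: "\<forall>i\<in>{1..n}. 0 \<le> v 0 i \<and> v 0 i \<le> 1"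
  shows "\<exists>lo hi. (\<forall>i\<in>{1..n}. lo \<le> v (s * N) i \<and> v (s * N) i \<le> hi)
           \<and> hi - lo \<le> contraction N ^ s"
proof (induction s)
  case 0
  then show ?case using bounds by (intro exI[of _ 0] exI[of _ 1]) auto
next
  case (Suc s)
  then obtain lo hi where h: "\<forall>i\<in>{1..n}. lo \<le> v (s * N) i \<and> v (s * N) i \<le> hi"
    "hi - lo \<le> contraction N ^ s" by blast
  obtain lo' hi' where h': "\<forall>i\<in>{1..n}. lo' \<le> v (s * N + N) i \<and> v (s * N + N) i \<le> hi'"
    "hi' - lo' \<le> contraction N * (hi - lo)"
    using averaging_contract[OF net N avg h(1)] by blast
  have "contraction N * (hi - lo) \<le> contraction N * contraction N ^ s"
    using h(2) contraction_bounds(1) by (rule mult_left_mono)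
  then show ?case using h' by (intro exI[of _ lo'] exI[of _ hi']) (auto simp: add.commute)
qed

text \<open>Since the graph is undirected, the iteration preserves the sum of the values.\<close>

lemma averaging_sum_step:
  assumes net: "network n E l" and avg: "averaging n E N v"
  shows "(\<Sum>i\<in>{1..n}. v (Suc r) i) = (\<Sum>i\<in>{1..n}. v r i)"
proof -
  have "of_nat (N+1) * (\<Sum>i\<in>{1..n}. v (Suc r) i)
      = (\<Sum>i\<in>{1..n}. (of_nat (N+1) - of_nat (deg E i)) * v r i + (\<Sum>j\<in>nbrs E i. v r j))"
    using avg unfolding averaging_def by (simp add: sum_distrib_left)
  also have "\<dots> = (\<Sum>i\<in>{1..n}. of_nat (N+1) * v r i) - (\<Sum>i\<in>{1..n}. of_nat (deg E i) * v r i)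
                 + (\<Sum>i\<in>{1..n}. \<Sum>j\<in>nbrs E i. v r j)"
    by (simp add: sum.distrib sum_subtractf algebra_simps)
  also have "\<dots> = of_nat (N+1) * (\<Sum>i\<in>{1..n}. v r i)"
    unfolding sum_over_edges[OF net] by (simp add: sum_distrib_left)
  finally show ?thesis by (metis nonzero_mult_div_cancel_left of_nat_eq_0_iff add_eq_0_iff_both_eq_0
        zero_neq_one)
qed

lemma averaging_sum:
  assumes net: "network n E l" and avg: "averaging n E N v"
  shows "(\<Sum>i\<in>{1..n}. v r i) = (\<Sum>i\<in>{1..n}. v 0 i)"
  by (induction r) (use averaging_sum_step[OF net avg] in auto)

lemma averaging_near_mean:
  assumes net: "network n E l" and N: "N \<ge> n" and avg: "averaging n E N v"
    and bounds: "\<forall>i\<in>{1..n}. 0 \<le> v 0 i \<and> v 0 i \<le> 1" and i: "i \<in> {1..n}"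
  shows "\<bar>v (s * N) i - (\<Sum>j\<in>{1..n}. v 0 j) / of_nat n\<bar> \<le> contraction N ^ s"
proof -
  obtain lo hi where h: "\<forall>i\<in>{1..n}. lo \<le> v (s * N) i \<and> v (s * N) i \<le> hi"
      "hi - lo \<le> contraction N ^ s"
    using averaging_iterate[OF net N avg bounds] by blast
  define mean where "mean = (\<Sum>j\<in>{1..n}. v 0 j) / of_nat n"
  have n: "(0::'a) < of_nat n" using net by (simp add: network_def)
  have "(\<Sum>j\<in>{1..n}. lo) \<le> (\<Sum>j\<in>{1..n}. v 0 j)" "(\<Sum>j\<in>{1..n}. v 0 j) \<le> (\<Sum>j\<in>{1..n}. hi)"
    using h(1) averaging_sum[OF net avg, of "s * N"] by (metis sum_mono)+
  then have "lo \<le> mean" "mean \<le> hi"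
    using n unfolding mean_def by (simp_all add: pos_le_divide_eq pos_divide_le_eq mult.commute)
  moreover have "lo \<le> v (s * N) i" "v (s * N) i \<le> hi" using h(1) i by auto
  ultimately show ?thesis using h(2) unfolding mean_def[symmetric] abs_le_iff by linarith
qed


section \<open>Rounding to fractions with small denominators\<close>

definition small_frac :: "nat \<Rightarrow> rat \<Rightarrow> bool" where
  "small_frac N p \<longleftrightarrow> (\<exists>(a::int) (b::nat). 1 \<le> b \<and> b \<le> N \<and> p = of_int a / of_nat b)"

text \<open>Half the minimal distance between two distinct fractions with denominators \<le> N.\<close>

definition tolerance :: "nat \<Rightarrow> rat" where
  "tolerance N = 1 / (2 * of_nat N ^ 2)"

definition nearest_frac :: "nat \<Rightarrow> rat \<Rightarrow> rat" where
  "nearest_frac N e = (SOME p. small_frac N p \<and> \<bar>e - p\<bar> < tolerance N)"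

lemma small_frac_separated:
  assumes p: "small_frac N p" and p': "small_frac N p'" and ne: "p \<noteq> p'"
  shows "1 / of_nat N ^ 2 \<le> \<bar>p - p'\<bar>"
proof -
  obtain a b where ab: "1 \<le> b" "b \<le> N" "p = of_int a / of_nat b"
    using p by (auto simp: small_frac_def)
  obtain a' b' where ab': "1 \<le> b'" "b' \<le> N" "p' = of_int a' / of_nat b'"
    using p' by (auto simp: small_frac_def)
  have B: "(of_nat b :: rat) > 0" "(of_nat b' :: rat) > 0" using ab(1) ab'(1) by auto
  define d where "d = a * int b' - a' * int b"
  have diff: "p - p' = of_int d / (of_nat b * of_nat b')"
    using B unfolding ab(3) ab'(3) d_def by (simp add: field_simps)
  then have "d \<noteq> 0" using ne by auto
  then have "(1::rat) \<le> \<bar>of_int d\<bar>" by linarith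
  then have "1 / (of_nat b * of_nat b') \<le> \<bar>p - p'\<bar>"
    using B unfolding diff by (simp add: abs_divide abs_mult divide_right_mono)
  moreover have "(of_nat b * of_nat b' :: rat) \<le> of_nat N ^ 2"
    using ab(2) ab'(2) unfolding power2_eq_square by (intro mult_mono) auto
  then have "1 / of_nat N ^ 2 \<le> 1 / (of_nat b * of_nat b' :: rat)"
    using B by (intro frac_le) auto
  ultimately show ?thesis by linarith
qed

lemma nearest_frac_eq:
  assumes p: "small_frac N p" and close: "\<bar>e - p\<bar> < tolerance N"
  shows "nearest_frac N e = p"
proof -
  let ?P = "\<lambda>p. small_frac N p \<and> \<bar>e - p\<bar> < tolerance N"
  have "?P (nearest_frac N e)" unfolding nearest_frac_def by (rule someI[of ?P p]) (use p close in simp)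
  then have "\<bar>nearest_frac N e - p\<bar> < 1 / of_nat N ^ 2"
    using close by (simp add: tolerance_def abs_diff_less_iff field_simps)
  then show ?thesis using small_frac_separated[OF _ p] \<open>?P (nearest_frac N e)\<close> by force
qed


text \<open>The integer form of the averaging iteration started from the indicator of the value
  k; its r-th iterate is (N + 1)^r times the averaging iterate.\<close>

primrec scaled_count :: "nat \<Rightarrow> nat \<Rightarrow> (nat \<Rightarrow> nat \<Rightarrow> bool) \<Rightarrow> (nat \<Rightarrow> nat) \<Rightarrow> nat \<Rightarrow> nat \<Rightarrow> nat" where
  "scaled_count N k E x 0 i = (if x i = k then 1 else 0)"
| "scaled_count N k E x (Suc r) i
     = (N + 1 - deg E i) * scaled_count N k E x r i + (\<Sum>j\<in>nbrs E i. scaled_count N k E x r j)"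

lemma scaled_count_bound:
  assumes net: "network n E l" and N: "N \<ge> n" and i: "i \<in> {1..n}"
  shows "scaled_count N k E x r i \<le> (N+1) ^ r"
  using i
proof (induction r arbitrary: i)
  case 0
  then show ?case by simp
next
  case (Suc r)
  have d: "deg E i \<le> N + 1" using deg_le[OF net Suc.prems] N by simp
  have "(\<Sum>j\<in>nbrs E i. scaled_count N k E x r j) \<le> (\<Sum>j\<in>nbrs E i. (N+1) ^ r)"
    using nbrs_subset[OF net] by (intro sum_mono Suc.IH) blast
  then have others: "(\<Sum>j\<in>nbrs E i. scaled_count N k E x r j) \<le> deg E i * (N+1) ^ r"
    by (simp add: deg_def)
  have own: "(N + 1 - deg E i) * scaled_count N k E x r i \<le> (N + 1 - deg E i) * (N+1) ^ r"
    using Suc.IH[OF Suc.prems] by (rule mult_left_mono) simp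
  have "scaled_count N k E x (Suc r) i \<le> (N + 1 - deg E i) * (N+1) ^ r + deg E i * (N+1) ^ r"
    unfolding scaled_count.simps by (rule add_mono[OF own others])
  also have "\<dots> = (N+1) ^ Suc r" using d by (simp add: add_mult_distrib[symmetric])
  finally show ?case .
qed

lemma averaging_scaled_count:
  assumes net: "network n E l" and N: "N \<ge> n"
  shows "averaging n E N (\<lambda>r i. of_nat (scaled_count N k E x r i) / of_nat (N+1) ^ r :: rat)"
  unfolding averaging_def
proof (intro allI ballI)
  fix r i assume i: "i \<in> {1..n}"
  have d: "deg E i \<le> N + 1" using deg_le[OF net i] N by simp
  have "(of_nat (N+1) :: rat) * (of_nat (scaled_count N k E x (Suc r) i) / of_nat (N+1) ^ Suc r)
      = of_nat (scaled_count N k E x (Suc r) i) / of_nat (N+1) ^ r" by simp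
  also have "\<dots> = ((of_nat (N+1) - of_nat (deg E i)) * of_nat (scaled_count N k E x r i)
        + (\<Sum>j\<in>nbrs E i. of_nat (scaled_count N k E x r j))) / of_nat (N+1) ^ r"
    using d by simp
  also have "\<dots> = (of_nat (N+1) - of_nat (deg E i)) * (of_nat (scaled_count N k E x r i) / of_nat (N+1) ^ r)
        + (\<Sum>j\<in>nbrs E i. of_nat (scaled_count N k E x r j) / of_nat (N+1) ^ r)"
    by (simp add: add_divide_distrib sum_divide_distrib)
  finally show "(of_nat (N+1) :: rat) * (of_nat (scaled_count N k E x (Suc r) i) / of_nat (N+1) ^ Suc r)
      = (of_nat (N+1) - of_nat (deg E i)) * (of_nat (scaled_count N k E x r i) / of_nat (N+1) ^ r)
        + (\<Sum>j\<in>nbrs E i. of_nat (scaled_count N k E x r j) / of_nat (N+1) ^ r)" .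
qed

definition blocks :: "nat \<Rightarrow> nat" where
  "blocks N = (LEAST s. contraction N ^ s < tolerance N)"

definition rounds :: "nat \<Rightarrow> nat" where
  "rounds N = N * blocks N"

lemma blocks_spec:
  assumes N: "N \<ge> 1"
  shows "contraction N ^ blocks N < tolerance N" and "blocks N \<ge> 1"
proof -
  have "(1::rat) \<le> of_nat N ^ 2" using N by (metis of_nat_1 of_nat_le_iff one_le_power)
  then have "0 < 2 * (of_nat N :: rat) ^ 2" "1 < 2 * (of_nat N :: rat) ^ 2" by linarith+
  then have tol: "0 < tolerance N" "tolerance N < 1" by (simp_all add: tolerance_def)
  have "0 < (of_rat (tolerance N) :: real)" using tol by simp
  moreover have "of_rat (contraction N :: rat) < (1::real)"
    using contraction_bounds(2)[of N] by (simp add: of_rat_less_1_iff)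
  ultimately obtain s where "(of_rat (contraction N) :: real) ^ s < of_rat (tolerance N)"
    using real_arch_pow_inv by blast
  then have "contraction N ^ s < tolerance N" by (metis of_rat_less of_rat_power)
  then show spec: "contraction N ^ blocks N < tolerance N" unfolding blocks_def by (rule LeastI)
  have "blocks N \<noteq> 0" using spec tol(2) by (metis less_asym power_0)
  then show "blocks N \<ge> 1" by simp
qed

lemma rounds_pos: "N \<ge> 1 \<Longrightarrow> rounds N \<ge> 1"
  using blocks_spec(2)[of N] by (simp add: rounds_def)

lemma nearest_frac_scaled_count:
  assumes net: "network n E l" and N: "N \<ge> n" and i: "i \<in> {1..n}"
  shows "nearest_frac N (of_nat (scaled_count N k E x (rounds N) i) / of_nat ((N+1) ^ rounds N))
       = prop_k n x k"
proof -
  define v where "v = (\<lambda>r i. of_nat (scaled_count N k E x r i) / of_nat (N+1) ^ r :: rat)"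
  have avg: "averaging n E N v" unfolding v_def by (rule averaging_scaled_count[OF net N])
  have n1: "n \<ge> 1" using net by (simp add: network_def)
  have "(\<Sum>j\<in>{1..n}. v 0 j) = (\<Sum>j\<in>{1..n}. if x j = k then 1 else 0)"
    by (auto simp: v_def intro!: sum.cong)
  also have "\<dots> = (\<Sum>j\<in>{j\<in>{1..n}. x j = k}. 1)"
    by (rule sum.inter_filter[symmetric]) simp
  finally have mean: "(\<Sum>j\<in>{1..n}. v 0 j) / of_nat n = prop_k n x k"
    by (simp add: prop_k_def)
  have "\<bar>v (blocks N * N) i - prop_k n x k\<bar> \<le> contraction N ^ blocks N"
    using averaging_near_mean[OF net N avg _ i] mean by (simp add: v_def)
  also have "\<dots> < tolerance N" using blocks_spec(1) n1 N by simp
  finally have "\<bar>v (rounds N) i - prop_k n x k\<bar> < tolerance N"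
    by (simp add: rounds_def mult.commute)
  moreover have "small_frac N (prop_k n x k)"
    unfolding small_frac_def prop_k_def using n1 N
    by (intro exI[of _ "int (card {i\<in>{1..n}. x i = k})"] exI[of _ n]) simp
  ultimately show ?thesis using nearest_frac_eq by (simp add: v_def)
qed


section \<open>The automaton\<close>

text \<open>Phase q guesses the size size_guess K q and tracks the value tracked K q; every
  pair (guess, value) occurs in some phase, and the guesses never decrease.\<close>

definition size_guess :: "nat \<Rightarrow> nat \<Rightarrow> nat" where
  "size_guess K q = q div K + 1"

definition tracked :: "nat \<Rightarrow> nat \<Rightarrow> nat" where
  "tracked K q = q mod K + 1"

text \<open>Clock ticks per round: enough to transmit in unary every count that can occur
  during a phase whose guess is at least the true size.\<close>

definition slots :: "nat \<Rightarrow> nat" where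
  "slots N = (N+1) ^ rounds N"

definition unary_bit :: "nat \<Rightarrow> nat \<Rightarrow> nat" where
  "unary_bit u a = (if u < a then 1 else 0)"

definition output_of :: "nat \<Rightarrow> rat list \<Rightarrow> rat list option" where
  "output_of K res = Some (map (\<lambda>k. res ! (k - 1)) [1..<K+1])"

text \<open>Memory: None initially, afterwards (phase, round, tick, count of the round,
  accumulated received bits, current estimates of the proportions).\<close>

type_synonym memory = "(nat \<times> nat \<times> nat \<times> nat \<times> nat \<times> rat list) option"

definition step :: "nat \<Rightarrow> nat \<Rightarrow> nat \<Rightarrow> memory \<Rightarrow> nat list \<Rightarrow> memory \<times> rat list option \<times> nat list" where
  "step K d x s ms = (case s of
     None \<Rightarrow> (let a = (if x = tracked K 0 then 1 else 0) in
              (Some (0, 0, 0, a, 0, replicate K 0), output_of K (replicate K 0),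
               replicate d (unary_bit 0 a)))
   | Some (q, r, u, a, acc, res) \<Rightarrow> (let N = size_guess K q; tot = acc + sum_list ms in
      if Suc u < slots N
      then (Some (q, r, Suc u, a, tot, res), output_of K res, replicate d (unary_bit (Suc u) a))
      else (let a' = (N + 1 - d) * a + tot in
        if Suc r < rounds N
        then (Some (q, Suc r, 0, a', 0, res), output_of K res, replicate d (unary_bit 0 a'))
        else (let res' = res[q mod K := nearest_frac N (of_nat a' / of_nat ((N+1) ^ rounds N))];
                  b = (if x = tracked K (Suc q) then 1 else 0) in
              (Some (Suc q, 0, 0, b, 0, res'), output_of K res', replicate d (unary_bit 0 b))))))"

definition Aut :: "nat \<Rightarrow> nat \<Rightarrow> nat \<Rightarrow> nat \<Rightarrow> rat list option \<Rightarrow> nat list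
    \<Rightarrow> nat \<times> rat list option \<times> nat list" where
  "Aut K d x z y ms = (case step K d x (from_nat z) ms of (s', y', ms') \<Rightarrow> (to_nat s', y', ms'))"

definition init_mem :: "nat \<Rightarrow> nat" where
  "init_mem d = to_nat (None :: memory)"

lemma Aut_well_formed:
  "fst (snd (Aut K d x z y ms)) \<in> Yset K \<and> length (snd (snd (Aut K d x z y ms))) = d
   \<and> set (snd (snd (Aut K d x z y ms))) \<subseteq> {0, 1}"
  unfolding Aut_def step_def Yset_def output_of_def unary_bit_def
  by (auto simp: Let_def split: option.splits prod.splits)


text \<open>The (phase, round, tick) counter, which is the same at all nodes at all times.\<close>

definition tick :: "nat \<Rightarrow> nat \<times> nat \<times> nat \<Rightarrow> nat \<times> nat \<times> nat" where
  "tick K = (\<lambda>(q, r, u). if Suc u < slots (size_guess K q) then (q, r, Suc u)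
     else if Suc r < rounds (size_guess K q) then (q, Suc r, 0) else (Suc q, 0, 0))"

definition clock :: "nat \<Rightarrow> nat \<Rightarrow> nat \<times> nat \<times> nat" where
  "clock K m = (tick K ^^ m) (0, 0, 0)"

lemma clock_Suc: "clock K (Suc m) = tick K (clock K m)"
  by (simp add: clock_def)

lemma rounds_guess_pos: "rounds (size_guess K q) \<ge> 1"
  by (rule rounds_pos) (simp add: size_guess_def)

lemma slots_pos: "0 < slots N"
  by (simp add: slots_def)

lemma clock_bounds: "clock K m = (q, r, u) \<Longrightarrow> u < slots (size_guess K q) \<and> r < rounds (size_guess K q)"
proof (induction m arbitrary: q r u)
  case 0
  then show ?case using slots_pos rounds_guess_pos[of K 0] by (auto simp: clock_def)
next
  case (Suc m)
  obtain q' r' u' where c: "clock K m = (q', r', u')" by (cases "clock K m") auto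
  from Suc.IH[OF c] Suc.prems c show ?case
    using slots_pos rounds_guess_pos[of K "Suc q'"]
    by (auto simp: clock_Suc tick_def split: if_splits)
qed

lemma tick_slots: "u + j < slots (size_guess K q) \<Longrightarrow> (tick K ^^ j) (q, r, u) = (q, r, u + j)"
  by (induction j) (auto simp: tick_def)

lemma tick_round:
  assumes "r < rounds (size_guess K q)"
  shows "(tick K ^^ slots (size_guess K q)) (q, r, 0)
     = (if Suc r < rounds (size_guess K q) then (q, Suc r, 0) else (Suc q, 0, 0))"
proof -
  define L where "L = slots (size_guess K q)"
  have L: "L = Suc (L - 1)" using slots_pos[of "size_guess K q"] by (simp add: L_def)
  have "(tick K ^^ (L - 1)) (q, r, 0) = (q, r, L - 1)"
    using tick_slots[of 0 "L - 1" K q r] slots_pos[of "size_guess K q"] by (simp add: L_def)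
  then have "(tick K ^^ L) (q, r, 0) = tick K (q, r, L - 1)"
    by (subst L) simp
  then show ?thesis using L by (simp add: tick_def L_def)
qed

lemma tick_reaches_round: "r < rounds (size_guess K q) \<Longrightarrow> \<exists>j. (tick K ^^ j) (q, 0, 0) = (q, r, 0)"
proof (induction r)
  case 0
  then show ?case by (metis funpow_0)
next
  case (Suc r)
  then obtain j where "(tick K ^^ j) (q, 0, 0) = (q, r, 0)" by auto
  then have "(tick K ^^ (slots (size_guess K q) + j)) (q, 0, 0) = (q, Suc r, 0)"
    using tick_round[of r K q] Suc.prems by (simp add: funpow_add)
  then show ?case by blast
qed

lemma clock_reaches_phase: "\<exists>m. clock K m = (q, 0, 0)"
proof (induction q)
  case 0
  then show ?case by (metis clock_def funpow_0)
next
  case (Suc q)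
  then obtain m where m: "clock K m = (q, 0, 0)" by blast
  define R where "R = rounds (size_guess K q)"
  have R: "R - 1 < R" using rounds_guess_pos[of K q] by (simp add: R_def)
  obtain j where j: "(tick K ^^ j) (q, 0, 0) = (q, R - 1, 0)"
    using tick_reaches_round R unfolding R_def by blast
  have "(tick K ^^ (slots (size_guess K q) + j + m)) (0, 0, 0) = (Suc q, 0, 0)"
    using tick_round[of "R - 1" K q] j m R by (simp add: funpow_add clock_def R_def)
  then show ?case unfolding clock_def by blast
qed

lemma clock_phase_mono: "m \<le> m' \<Longrightarrow> fst (clock K m) \<le> fst (clock K m')"
proof (induction m' rule: dec_induct)
  case (step m')
  have "fst (clock K m') \<le> fst (tick K (clock K m'))"
    by (cases "clock K m'") (auto simp: tick_def)
  then show ?case using step.IH by (simp add: clock_Suc)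
qed simp


section \<open>Simulation of the execution\<close>

text \<open>The count of node i after r rounds of phase q.  Received counts are capped by the
  number of ticks of a round, since a longer unary message cannot be transmitted.\<close>

primrec phase_count :: "nat \<Rightarrow> (nat \<Rightarrow> nat \<Rightarrow> bool) \<Rightarrow> (nat \<Rightarrow> nat) \<Rightarrow> nat \<Rightarrow> nat \<Rightarrow> nat \<Rightarrow> nat" where
  "phase_count K E x q 0 i = (if x i = tracked K q then 1 else 0)"
| "phase_count K E x q (Suc r) i = (size_guess K q + 1 - deg E i) * phase_count K E x q r i
      + (\<Sum>j\<in>nbrs E i. min (phase_count K E x q r j) (slots (size_guess K q)))"

primrec estimates :: "nat \<Rightarrow> (nat \<Rightarrow> nat \<Rightarrow> bool) \<Rightarrow> (nat \<Rightarrow> nat) \<Rightarrow> nat \<Rightarrow> nat \<Rightarrow> rat list" where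
  "estimates K E x i 0 = replicate K 0"
| "estimates K E x i (Suc q) = (estimates K E x i q)[q mod K :=
      nearest_frac (size_guess K q) (of_nat (phase_count K E x q (rounds (size_guess K q)) i)
        / of_nat ((size_guess K q + 1) ^ rounds (size_guess K q)))]"

text \<open>The state of node i after m + 1 steps: at tick u of round r of phase q it has
  received the first u bits of the counts of its neighbours.\<close>

definition ideal_state :: "nat \<Rightarrow> (nat \<Rightarrow> nat \<Rightarrow> bool) \<Rightarrow> (nat \<Rightarrow> nat) \<Rightarrow> nat \<Rightarrow> nat
    \<Rightarrow> nat \<times> rat list option \<times> nat list" where
  "ideal_state K E x m i = (case clock K m of (q, r, u) \<Rightarrow>
     (to_nat (Some (q, r, u, phase_count K E x q r i,
                    \<Sum>j\<in>nbrs E i. min (phase_count K E x q r j) u, estimates K E x i q) :: memory),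
      output_of K (estimates K E x i q),
      replicate (deg E i) (unary_bit u (phase_count K E x q r i))))"

lemma min_unary_bit: "min a u + unary_bit u a = min a (Suc u)"
  by (simp add: unary_bit_def)

lemma Aut_ideal_step:
  assumes c: "clock K m = (q, r, u)"
    and ms: "sum_list ms = (\<Sum>j\<in>nbrs E i. unary_bit u (phase_count K E x q r j))"
  shows "Aut K (deg E i) (x i) (fst (ideal_state K E x m i)) y ms = ideal_state K E x (Suc m) i"
proof -
  define N where "N = size_guess K q"
  define a where "a = phase_count K E x q r i"
  define acc where "acc = (\<Sum>j\<in>nbrs E i. min (phase_count K E x q r j) u)"
  define res where "res = estimates K E x i q"
  have tot: "acc + sum_list ms = (\<Sum>j\<in>nbrs E i. min (phase_count K E x q r j) (Suc u))"
    unfolding acc_def ms sum.distrib[symmetric] min_unary_bit ..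
  have Aut: "Aut K (deg E i) (x i) (fst (ideal_state K E x m i)) y ms
      = (case step K (deg E i) (x i) (Some (q, r, u, a, acc, res)) ms
         of (s', y', ms') \<Rightarrow> (to_nat s', y', ms'))"
    by (simp add: Aut_def ideal_state_def c a_def acc_def res_def)
  have bounds: "u < slots N" "r < rounds N" using clock_bounds[OF c] by (auto simp: N_def)
  consider (tick) "Suc u < slots N"
    | (round) "Suc u = slots N" "Suc r < rounds N"
    | (phase) "Suc u = slots N" "Suc r = rounds N"
    using bounds by linarith
  then show ?thesis
  proof cases
    case tick
    then show ?thesis unfolding Aut using c tot
      by (simp add: ideal_state_def step_def clock_Suc tick_def Let_def N_def a_def res_def)
  next
    case round
    then show ?thesis unfolding Aut using c tot
      by (simp add: ideal_state_def step_def clock_Suc tick_def Let_def N_def a_def res_def)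
  next
    case phase
    define b where "b = (if x i = tracked K (Suc q) then 1 else (0::nat))"
    define a' where "a' = (N + 1 - deg E i) * a + (acc + sum_list ms)"
    have "phase_count K E x q (rounds N) i = phase_count K E x q (Suc r) i"
      using phase(2) by simp
    also have "\<dots> = a'" using tot phase(1) by (simp add: a'_def a_def N_def)
    finally have a': "a' = phase_count K E x q (rounds N) i" by simp
    define res' where
      "res' = res[q mod K := nearest_frac N (of_nat a' / of_nat ((N + 1) ^ rounds N))]"
    have "step K (deg E i) (x i) (Some (q, r, u, a, acc, res)) ms
       = (Some (Suc q, 0, 0, b, 0, res'), output_of K res', replicate (deg E i) (unary_bit 0 b))"
      using phase unfolding N_def b_def a'_def res'_def by (simp add: step_def Let_def)
    then show ?thesis unfolding Aut using c phase
      by (simp add: ideal_state_def clock_Suc tick_def res'_def a' b_def N_def res_def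
          del: of_nat_add of_nat_mult of_nat_power)
  qed
qed

lemma exec_ideal:
  assumes net: "network n E l" and i: "i \<in> {1..n}"
  shows "exec (Aut K) init_mem None 0 E l x (Suc m) i = ideal_state K E x m i"
  using i
proof (induction m arbitrary: i)
  case 0
  then show ?case
    by (auto simp: ideal_state_def Aut_def step_def init_mem_def clock_def Let_def)
next
  case (Suc m)
  obtain q r u where c: "clock K m = (q, r, u)" by (cases "clock K m") auto
  define S where "S = exec (Aut K) init_mem None 0 E l x (Suc m)"
  define ms where "ms = map (\<lambda>k. let j = port_nbr E l i k in snd (snd (S j)) ! (l j i - 1))
                              [1..<deg E i + 1]"
  have received: "sum_list ms = (\<Sum>j\<in>nbrs E i. unary_bit u (phase_count K E x q r j))"
    unfolding ms_def
  proof (rule sum_received[OF net Suc.prems])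
    fix j assume "j \<in> nbrs E i"
    then have "j \<in> {1..n}" using nbrs_subset[OF net] by blast
    then show "snd (snd (S j)) = replicate (deg E j) (unary_bit u (phase_count K E x q r j))"
      using Suc.IH S_def c by (simp add: ideal_state_def)
  qed
  have "exec (Aut K) init_mem None 0 E l x (Suc (Suc m)) i
      = Aut K (deg E i) (x i) (fst (S i)) (fst (snd (S i))) ms"
    by (simp add: S_def ms_def Let_def)
  also have "\<dots> = ideal_state K E x (Suc m) i"
    using Aut_ideal_step[OF c received] Suc.IH[OF Suc.prems] by (simp add: S_def)
  finally show ?case .
qed


text \<open>Once the guess is at least the size of the network, the cap on received counts is
  never reached, so the phase computes the scaled counts.\<close>

lemma phase_count_eq_scaled_count:
  assumes net: "network n E l" and N: "n \<le> size_guess K q"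
    and r: "r \<le> rounds (size_guess K q)" and i: "i \<in> {1..n}"
  shows "phase_count K E x q r i = scaled_count (size_guess K q) (tracked K q) E x r i"
  using r i
proof (induction r arbitrary: i)
  case 0
  then show ?case by simp
next
  case (Suc r)
  let ?N = "size_guess K q"
  have IH: "phase_count K E x q r j = scaled_count ?N (tracked K q) E x r j" if "j \<in> {1..n}" for j
    using Suc.IH[OF _ that] Suc.prems(1) by simp
  have capped: "min (phase_count K E x q r j) (slots ?N) = scaled_count ?N (tracked K q) E x r j"
    if "j \<in> nbrs E i" for j
  proof -
    have j: "j \<in> {1..n}" using that nbrs_subset[OF net] by blast
    have "scaled_count ?N (tracked K q) E x r j \<le> (?N + 1) ^ r"
      using scaled_count_bound[OF net N j] .
    also have "\<dots> \<le> slots ?N"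
      unfolding slots_def using Suc.prems(1) by (intro power_increasing) auto
    finally show ?thesis using IH[OF j] by simp
  qed
  show ?case
    using IH[OF Suc.prems(2)] sum.cong[OF refl capped] by simp
qed

lemma length_estimates: "length (estimates K E x i q) = K"
  by (induction q) auto

lemma estimates_correct:
  assumes net: "network n E l" and i: "i \<in> {1..n}" and k': "k' < K"
  shows "(\<exists>q'<q. n \<le> size_guess K q' \<and> q' mod K = k') \<Longrightarrow> estimates K E x i q ! k' = prop_k n x (Suc k')"
proof (induction q)
  case 0
  then show ?case by simp
next
  case (Suc q)
  have len: "q mod K < length (estimates K E x i q)"
    using k' by (simp add: length_estimates)
  show ?case
  proof (cases "k' = q mod K")
    case True
    obtain q' where q': "q' < Suc q" "n \<le> size_guess K q'" using Suc.prems by blast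
    then have "q' div K \<le> q div K" by (intro div_le_mono) simp
    then have N: "n \<le> size_guess K q" using q'(2) by (simp add: size_guess_def)
    define estimate where "estimate = nearest_frac (size_guess K q) (of_nat (phase_count K E x q (rounds (size_guess K q)) i)
        / of_nat ((size_guess K q + 1) ^ rounds (size_guess K q)))"
    have "estimate = prop_k n x (tracked K q)"
      unfolding estimate_def phase_count_eq_scaled_count[OF net N order.refl i]
      by (rule nearest_frac_scaled_count[OF net N i])
    moreover have "tracked K q = Suc k'" using True by (simp add: tracked_def)
    ultimately show ?thesis using True len by (simp add: estimate_def del: of_nat_power)
  next
    case False
    then have "\<exists>q'<q. n \<le> size_guess K q' \<and> q' mod K = k'" using Suc.prems less_Suc_eq by auto
    then show ?thesis using Suc.IH False by simp
  qed
qed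

lemma estimates_final:
  assumes net: "network n E l" and i: "i \<in> {1..n}" and q: "n * K \<le> q"
  shows "output_of K (estimates K E x i q) = proportions K n x"
proof -
  have n1: "n \<ge> 1" using net by (simp add: network_def)
  have "estimates K E x i q ! (k - 1) = prop_k n x k" if "k \<in> set [1..<K+1]" for k
  proof -
    have k: "1 \<le> k" "k \<le> K" using that by auto
    define q' where "q' = (k - 1) + (n - 1) * K"
    have "q' < n * K" using k n1 unfolding q'_def by (cases n) auto
    moreover have "k - 1 < K" using k by simp
    then have "size_guess K q' = n" "q' mod K = k - 1"
      using n1 by (simp_all add: q'_def size_guess_def)
    ultimately have "\<exists>q'<q. n \<le> size_guess K q' \<and> q' mod K = k - 1" using q by force
    then show ?thesis using estimates_correct[OF net i, of "k - 1" K q x] k by simp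
  qed
  then show ?thesis unfolding output_of_def proportions_def
    by (intro arg_cong[where f = Some] map_cong) simp_all
qed

lemma Aut_computes_proportions:
  assumes net: "network n E l"
  shows "has_final_output (Aut K) init_mem None 0 E l x n (proportions K n x)"
proof -
  obtain m0 where m0: "clock K m0 = (n * K, 0, 0)" using clock_reaches_phase by blast
  show ?thesis unfolding has_final_output_def
  proof (intro exI[of _ "Suc m0"] allI impI ballI)
  fix t i assume t: "Suc m0 \<le> t" and i: "i \<in> {1..n}"
  then obtain m where tm: "t = Suc m" and mm: "m0 \<le> m" by (metis Suc_le_D Suc_le_mono)
  obtain q r u where c: "clock K m = (q, r, u)" by (cases "clock K m") auto
  have q: "n * K \<le> q" using clock_phase_mono[OF mm, of K] m0 c by simp
  show "fst (snd (exec (Aut K) init_mem None 0 E l x t i)) = proportions K n x"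
    using exec_ideal[OF net i] estimates_final[OF net i q] c tm by (simp add: ideal_state_def)
  qed
qed

theorem theorem4:
  fixes K :: nat
  shows "computable_inf_mem {1..K} (Yset K) None (proportions K)"
  unfolding computable_inf_mem_def
proof (intro conjI exI allI impI)
  show "finite {1..K}" "countable (Yset K)" "None \<in> Yset K"
    by (simp_all add: countableI_type Yset_def)
  show "finite {0::nat, 1}" "(0::nat) \<in> {0, 1}" by simp_all
  fix d x z y ms
  show "fst (snd (Aut K d x z y ms)) \<in> Yset K" "length (snd (snd (Aut K d x z y ms))) = d"
    "set (snd (snd (Aut K d x z y ms))) \<subseteq> {0, 1}"
    using Aut_well_formed by blast+
next
  fix n E l x
  assume "network n E l \<and> (\<forall>i\<in>{1..n}. x i \<in> {1..K})"
  then show "has_final_output (Aut K) init_mem None 0 E l x n (proportions K n x)"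
    using Aut_computes_proportions by blast
qed

end
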